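(* Let $p$ and $r$ be states such that $\beta(p)$ tightly thermomajorizes $\beta(r)$. Then there exist a biplanar extremal thermal process $T\in TP(d)$ with $Tp=r$, a $\beta$-order $\lambda$ of $p$ and a $\beta$-order $\mu$ of $r$ such that the drawing of $G(T)$ with left ordering $\lambda$ and right ordering $\mu$ is plain (i.e. one may take $\pi_{in}(T)=\lambda$, $\pi_{out}(T)=\mu$). If moreover the ratios $p_i/g_i$ are pairwise distinct, then $T$ is the only element of $TP(d)$ satisfying $Tp=r$.
   Context: Fix $d\ge 2$, $\beta\in(0,\infty)$ and pairwise distinct reals $E_0=0,E_1,\dots,E_{d-1}$. Put $q_{m,n}=e^{-\beta(E_m-E_n)}$, $Z=\sum_j q_{j,0}$, $g_i=q_{i,0}/Z$. A state is a probability vector in $\mathbb{R}^d$. $TP(d)$ is the set of $d\times d$ real matrices with non-negative entries, columns summing to $1$, and $Tg=g$; an extremal thermal process is an extreme point of the convex set $TP(d)$. $\beta$-order and curve: for a state $p$, a permutation $\pi$ of $\{0,\dots,d-1\}$ with $p_{\pi(0)}/g_{\pi(0)}\ge\dots\ge p_{\pi(d-1)}/g_{\pi(d-1)}$ gives the $\beta$-order $(\pi(0),\dots,\pi(d-1))$; with $x_k=\sum_{i\le k}g_{\pi(i)}$, $y_k=\sum_{i\le k}p_{\pi(i)}$, the thermomajorization curve $\beta(p)$ is the graph of the concave piecewise-linear function on $[0,1]$ through $(0,0),(x_0,y_0),\dots,(x_{d-1},y_{d-1})=(1,1)$; its elbows are $(x_k,y_k)$, $k=0,\dots,d-2$. $\beta(p)$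 tightly thermomajorizes $\beta(r)$ if every elbow of $\beta(r)$ lies on $\beta(p)$. Graphs: for $T\in TP(d)$, $G(T)$ is the bipartite graph with left vertices $L_0,\dots,L_{d-1}$ (columns), right vertices $R_0,\dots,R_{d-1}$ (rows), and an edge $\{L_j,R_i\}$ iff $T_{ij}>0$ (this is the support graph of the transportation matrix $T\,\mathrm{diag}(q_{0,0},\dots,q_{d-1,0})$). Given orderings $\lambda=(\lambda_0,\dots,\lambda_{d-1})$ and $\mu=(\mu_0,\dots,\mu_{d-1})$ (permutations of $\{0,\dots,d-1\}$), place $L_{\lambda_a}$ at height $a$ on one vertical line and $R_{\mu_b}$ at height $b$ on a parallel line and draw edges as straight segments; the drawing is plain if there are no two edges $\{L_{\lambda_a},R_{\mu_b}\}$, $\{L_{\lambda_{a'}},R_{\mu_{b'}}\}$ with $a<a'$ and $b>b'$. An extremal thermal process $T$ is biplanar if some pair $(\lambda,\mu)$ gives a plain drawing; such $\lambda,\mu$ are called orders $\pi_{in}(T),\pi_{out}(T)$ of $T$. *)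

theory Defs
  imports Main "HOL.Transcendental"
begin

text \<open>Indices are 0..d-1 (naturals below d). Vectors are nat => real, matrices
nat => nat => real (T i j = entry in row i, column j).\<close>

definition gibbs :: "nat \<Rightarrow> real \<Rightarrow> (nat \<Rightarrow> real) \<Rightarrow> nat \<Rightarrow> real" where
  "gibbs d \<beta> E i = exp (- \<beta> * E i) / (\<Sum>j<d. exp (- \<beta> * E j))"

definition is_state :: "nat \<Rightarrow> (nat \<Rightarrow> real) \<Rightarrow> bool" where
  "is_state d p \<longleftrightarrow> (\<forall>i<d. 0 \<le> p i) \<and> (\<Sum>i<d. p i) = 1"

definition TP :: "nat \<Rightarrow> (nat \<Rightarrow> real) \<Rightarrow> (nat \<Rightarrow> nat \<Rightarrow> real) set" where
  "TP d g = {T. (\<forall>i j. (i \<ge> d \<or> j \<ge> d) \<longrightarrow> T i j = 0)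
               \<and> (\<forall>i<d. \<forall>j<d. 0 \<le> T i j)
               \<and> (\<forall>j<d. (\<Sum>i<d. T i j) = 1)
               \<and> (\<forall>i<d. (\<Sum>j<d. T i j * g j) = g i)}"

definition extremal_TP :: "nat \<Rightarrow> (nat \<Rightarrow> real) \<Rightarrow> (nat \<Rightarrow> nat \<Rightarrow> real) \<Rightarrow> bool" where
  "extremal_TP d g T \<longleftrightarrow> T \<in> TP d g \<and>
     \<not> (\<exists>A\<in>TP d g. \<exists>B\<in>TP d g. A \<noteq> B \<and>
          (\<exists>t::real. 0 < t \<and> t < 1 \<and> T = (\<lambda>i j. t * A i j + (1 - t) * B i j)))"

definition mat_apply :: "nat \<Rightarrow> (nat \<Rightarrow> nat \<Rightarrow> real) \<Rightarrow> (nat \<Rightarrow> real) \<Rightarrow> nat \<Rightarrow> real" where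
  "mat_apply d T p i = (\<Sum>j<d. T i j * p j)"

definition maps_to :: "nat \<Rightarrow> (nat \<Rightarrow> nat \<Rightarrow> real) \<Rightarrow> (nat \<Rightarrow> real) \<Rightarrow> (nat \<Rightarrow> real) \<Rightarrow> bool" where
  "maps_to d T p r \<longleftrightarrow> (\<forall>i<d. mat_apply d T p i = r i)"

definition beta_order :: "nat \<Rightarrow> (nat \<Rightarrow> real) \<Rightarrow> (nat \<Rightarrow> real) \<Rightarrow> (nat \<Rightarrow> nat) \<Rightarrow> bool" where
  "beta_order d g p \<pi> \<longleftrightarrow> bij_betw \<pi> {..<d} {..<d} \<and>
     (\<forall>k. k + 1 < d \<longrightarrow> p (\<pi> (k + 1)) / g (\<pi> (k + 1)) \<le> p (\<pi> k) / g (\<pi> k))"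

text \<open>Vertices of the curve w.r.t. an order: vertex j (0 \<le> j \<le> d) is the pair of partial sums
over the first j entries; vertex 0 = (0,0), vertex d = (1,1); vertex j for 1 \<le> j \<le> d-1 is the
elbow (x_{j-1}, y_{j-1}) of the paper.\<close>
definition curve_vertex :: "(nat \<Rightarrow> real) \<Rightarrow> (nat \<Rightarrow> real) \<Rightarrow> (nat \<Rightarrow> nat) \<Rightarrow> nat \<Rightarrow> real \<times> real" where
  "curve_vertex g p \<pi> j = ((\<Sum>i<j. g (\<pi> i)), (\<Sum>i<j. p (\<pi> i)))"

text \<open>A point lies on the thermomajorization curve beta(p): it lies on one of the segments of the
piecewise linear graph through the vertices of a beta-order of p (the curve does not depend on
the choice of beta-order).\<close>
definition on_curve :: "nat \<Rightarrow> (nat \<Rightarrow> real) \<Rightarrow> (nat \<Rightarrow> real) \<Rightarrow> real \<times> real \<Rightarrow> bool" where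
  "on_curve d g p pt \<longleftrightarrow> (\<exists>\<pi>. beta_order d g p \<pi> \<and>
     (\<exists>j<d. \<exists>t::real. 0 \<le> t \<and> t \<le> 1 \<and>
        fst pt = (1 - t) * fst (curve_vertex g p \<pi> j) + t * fst (curve_vertex g p \<pi> (Suc j)) \<and>
        snd pt = (1 - t) * snd (curve_vertex g p \<pi> j) + t * snd (curve_vertex g p \<pi> (Suc j))))"

definition tightly_thermomaj :: "nat \<Rightarrow> (nat \<Rightarrow> real) \<Rightarrow> (nat \<Rightarrow> real) \<Rightarrow> (nat \<Rightarrow> real) \<Rightarrow> bool" where
  "tightly_thermomaj d g p r \<longleftrightarrow> (\<forall>\<mu>. beta_order d g r \<mu> \<longrightarrow>
     (\<forall>j. 1 \<le> j \<and> j < d \<longrightarrow> on_curve d g p (curve_vertex g r \<mu> j)))"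

text \<open>Plain drawing of G(T): L_{lambda a} at height a, R_{mu b} at height b; edge {L_j,R_i} iff T i j > 0.\<close>
definition plain_drawing :: "nat \<Rightarrow> (nat \<Rightarrow> nat \<Rightarrow> real) \<Rightarrow> (nat \<Rightarrow> nat) \<Rightarrow> (nat \<Rightarrow> nat) \<Rightarrow> bool" where
  "plain_drawing d T lam \<mu> \<longleftrightarrow> \<not> (\<exists>a a' b b'. a < d \<and> a' < d \<and> b < d \<and> b' < d \<and> a < a' \<and> b' < b \<and>
      T (\<mu> b) (lam a) > 0 \<and> T (\<mu> b') (lam a') > 0)"

definition biplanar :: "nat \<Rightarrow> (nat \<Rightarrow> real) \<Rightarrow> (nat \<Rightarrow> nat \<Rightarrow> real) \<Rightarrow> bool" where
  "biplanar d g T \<longleftrightarrow> extremal_TP d g T \<and>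
     (\<exists>lam \<mu>. bij_betw lam {..<d} {..<d} \<and> bij_betw \<mu> {..<d} {..<d} \<and> plain_drawing d T lam \<mu>)"

end

theory Submission
  imports Defs
begin

text \<open>Lay the items side by side on \<open>[0, 1]\<close> as intervals of lengths \<open>g i\<close>, once in a
  beta-order \<open>lam\<close> of \<open>p\<close> and once in a beta-order \<open>\<mu>\<close> of \<open>r\<close>, and let \<open>T\<close> move item \<open>j\<close>
  to item \<open>i\<close> in proportion to the overlap of their intervals: \<open>T i j * g j\<close> is the length of
  the intersection of the interval of \<open>i\<close> in the \<open>\<mu>\<close>-layout with the interval of \<open>j\<close> in the
  \<open>lam\<close>-layout. Both layouts are monotone, so the support of \<open>T\<close> does not cross in the orders
  \<open>lam\<close> and \<open>\<mu>\<close>; since a balanced matrix with non-crossing support vanishes, \<open>T\<close> is extremal.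

  The rest is fractional knapsack. Among weight vectors \<open>s\<close> in \<open>[0, 1]\<^sup>d\<close> with g-mass
  \<open>\<Sum>i. s i * g i = x\<close>, the p-mass \<open>\<Sum>i. s i * p i\<close> is maximised by filling greedily along any
  beta-order of \<open>p\<close>, the maximum is the height of \<open>\<beta>(p)\<close> at \<open>x\<close>, and the maximiser is unique
  when the ratios \<open>p i / g i\<close> are distinct. The first \<open>k\<close> rows of \<open>T\<close> (in the order \<open>\<mu>\<close>) are
  the greedy filling up to the abscissa of the \<open>k\<close>-th vertex of \<open>\<beta>(r)\<close>; by tightness that vertex
  lies on \<open>\<beta>(p)\<close>, so these rows carry exactly the p-mass of the first \<open>k\<close> entries of \<open>r\<close>, and
  \<open>T p = r\<close>. For any \<open>T'\<close> in \<open>TP(d)\<close> with \<open>T' p = r\<close> the sums of its first \<open>k\<close> rows are a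
  maximiser at the same vertex, hence are determined, and so is \<open>T'\<close>.\<close>

section \<open>Overlap of real intervals\<close>

definition overlap :: "real \<Rightarrow> real \<Rightarrow> real \<Rightarrow> real \<Rightarrow> real" where
  "overlap u v a b = max 0 (min v b - max u a)"

lemma overlap_nonneg: "0 \<le> overlap u v a b"
  by (simp add: overlap_def)

lemma overlap_commute: "overlap u v a b = overlap a b u v"
  by (simp add: overlap_def min.commute max.commute)

lemma overlap_split_left: "u \<le> v \<Longrightarrow> v \<le> w \<Longrightarrow> overlap u w a b = overlap u v a b + overlap v w a b"
  by (simp add: overlap_def max_def min_def)

lemma overlap_split_right: "a \<le> m \<Longrightarrow> m \<le> b \<Longrightarrow> overlap u v a b = overlap u v a m + overlap u v m b"
  using overlap_split_left[of a m b u v] by (simp add: overlap_commute)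

lemma overlap_subinterval: "a \<le> u \<Longrightarrow> u \<le> v \<Longrightarrow> v \<le> b \<Longrightarrow> overlap u v a b = v - u"
  by (simp add: overlap_def max_def min_def)

lemma overlap_le_length: "a \<le> b \<Longrightarrow> overlap u v a b \<le> b - a"
  by (simp add: overlap_def max_def min_def)

lemma overlap_pos_imp_intersect: "0 < overlap u v a b \<Longrightarrow> u < b \<and> a < v"
  by (simp add: overlap_def max_def min_def split: if_splits)

lemma sum_overlap_partition:
  assumes "\<And>k k'. k \<le> k' \<Longrightarrow> k' \<le> n \<Longrightarrow> X k \<le> X k'"
  shows "(\<Sum>k<n. overlap u v (X k) (X (Suc k))) = overlap u v (X 0) (X n)"
  using assms
proof (induction n)
  case 0
  show ?case by (simp add: overlap_def)
next
  case (Suc n)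
  then show ?case
    using overlap_split_right[of "X 0" "X n" "X (Suc n)" u v] by simp
qed

section \<open>Fractional knapsack\<close>

lemma fractional_knapsack_gap:
  fixes s \<sigma> g p :: "'a \<Rightarrow> real"
  assumes g_pos: "\<And>i. i \<in> A \<Longrightarrow> 0 < g i"
    and s01: "\<And>i. i \<in> A \<Longrightarrow> 0 \<le> s i \<and> s i \<le> 1"
    and threshold: "\<And>i. i \<in> A \<Longrightarrow> (\<sigma> i < 1 \<longrightarrow> p i / g i \<le> c) \<and> (0 < \<sigma> i \<longrightarrow> c \<le> p i / g i)"
    and same_mass: "(\<Sum>i\<in>A. s i * g i) = (\<Sum>i\<in>A. \<sigma> i * g i)"
  shows "(\<Sum>i\<in>A. s i * p i) - (\<Sum>i\<in>A. \<sigma> i * p i) = (\<Sum>i\<in>A. (s i - \<sigma> i) * g i * (p i / g i - c))"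
    and "\<And>i. i \<in> A \<Longrightarrow> (s i - \<sigma> i) * g i * (p i / g i - c) \<le> 0"
proof -
  have "(\<Sum>i\<in>A. (s i - \<sigma> i) * g i * (p i / g i - c))
      = (\<Sum>i\<in>A. (s i * p i - \<sigma> i * p i) - c * (s i * g i - \<sigma> i * g i))"
    using g_pos by (intro sum.cong) (auto simp: field_simps less_imp_neq[symmetric])
  also have "\<dots> = (\<Sum>i\<in>A. s i * p i) - (\<Sum>i\<in>A. \<sigma> i * p i)"
    using same_mass by (simp add: sum_subtractf flip: sum_distrib_left)
  finally show "(\<Sum>i\<in>A. s i * p i) - (\<Sum>i\<in>A. \<sigma> i * p i) = (\<Sum>i\<in>A. (s i - \<sigma> i) * g i * (p i / g i - c))"
    by simp
next
  fix i assume i: "i \<in> A"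
  have sign: "(s i - \<sigma> i) * (p i / g i - c) \<le> 0"
  proof (cases "p i / g i" c rule: linorder_cases)
    case less
    then have "\<sigma> i \<le> 0" using threshold[OF i] by fastforce
    then show ?thesis using less s01[OF i] by (intro mult_nonneg_nonpos) auto
  next
    case greater
    then have "1 \<le> \<sigma> i" using threshold[OF i] by fastforce
    then show ?thesis using greater s01[OF i] by (intro mult_nonpos_nonneg) auto
  qed simp
  then show "(s i - \<sigma> i) * g i * (p i / g i - c) \<le> 0"
    using mult_nonneg_nonpos[OF less_imp_le[OF g_pos[OF i]] sign] by (simp only: ac_simps)
qed

lemma fractional_knapsack_le:
  fixes s \<sigma> g p :: "'a \<Rightarrow> real"
  assumes g_pos: "\<And>i. i \<in> A \<Longrightarrow> 0 < g i"
    and s01: "\<And>i. i \<in> A \<Longrightarrow> 0 \<le> s i \<and> s i \<le> 1"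
    and threshold: "\<And>i. i \<in> A \<Longrightarrow> (\<sigma> i < 1 \<longrightarrow> p i / g i \<le> c) \<and> (0 < \<sigma> i \<longrightarrow> c \<le> p i / g i)"
    and same_mass: "(\<Sum>i\<in>A. s i * g i) = (\<Sum>i\<in>A. \<sigma> i * g i)"
  shows "(\<Sum>i\<in>A. s i * p i) \<le> (\<Sum>i\<in>A. \<sigma> i * p i)"
proof -
  note gap = fractional_knapsack_gap[OF g_pos s01 threshold same_mass]
  have "(\<Sum>i\<in>A. (s i - \<sigma> i) * g i * (p i / g i - c)) \<le> 0"
    by (rule sum_nonpos) (rule gap(2))
  then show ?thesis
    using gap(1) by linarith
qed

lemma fractional_knapsack_unique:
  fixes s \<sigma> g p :: "'a \<Rightarrow> real"
  assumes "finite A"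
    and g_pos: "\<And>i. i \<in> A \<Longrightarrow> 0 < g i"
    and s01: "\<And>i. i \<in> A \<Longrightarrow> 0 \<le> s i \<and> s i \<le> 1"
    and threshold: "\<And>i. i \<in> A \<Longrightarrow> (\<sigma> i < 1 \<longrightarrow> p i / g i \<le> c) \<and> (0 < \<sigma> i \<longrightarrow> c \<le> p i / g i)"
    and same_g_mass: "(\<Sum>i\<in>A. s i * g i) = (\<Sum>i\<in>A. \<sigma> i * g i)"
    and same_p_mass: "(\<Sum>i\<in>A. s i * p i) = (\<Sum>i\<in>A. \<sigma> i * p i)"
    and distinct_ratios: "inj_on (\<lambda>i. p i / g i) A"
    and "i \<in> A"
  shows "s i = \<sigma> i"
proof -
  \<comment> \<open>Items off the threshold agree by the gap identity; distinct ratios leave at most one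
    item on it, and the g-mass fixes that one.\<close>
  note gap = fractional_knapsack_gap[OF g_pos s01 threshold same_g_mass]
  have "(\<Sum>k\<in>A. - ((s k - \<sigma> k) * g k * (p k / g k - c))) = 0"
    using gap(1) same_p_mass by (simp add: sum_negf)
  then have "\<forall>k\<in>A. - ((s k - \<sigma> k) * g k * (p k / g k - c)) = 0"
    using sum_nonneg_eq_0_iff[OF \<open>finite A\<close>, of "\<lambda>k. - ((s k - \<sigma> k) * g k * (p k / g k - c))"] gap(2)
    by (simp only: neg_0_le_iff_le)
  then have agree: "s k = \<sigma> k" if "k \<in> A" "p k / g k \<noteq> c" for k
    using that g_pos[of k] by auto
  show ?thesis
  proof (cases "p i / g i = c")
    case True
    have "p k / g k \<noteq> c" if "k \<in> A - {i}" for k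
      using True distinct_ratios \<open>i \<in> A\<close> that unfolding inj_on_def by blast
    then have "(\<Sum>k\<in>A - {i}. (s k - \<sigma> k) * g k) = 0"
      using agree by (intro sum.neutral) auto
    moreover have "(\<Sum>k\<in>A. (s k - \<sigma> k) * g k) = 0"
      using same_g_mass by (simp add: sum_subtractf left_diff_distrib)
    ultimately show ?thesis
      using sum.remove[OF \<open>finite A\<close> \<open>i \<in> A\<close>, of "\<lambda>k. (s k - \<sigma> k) * g k"] g_pos[OF \<open>i \<in> A\<close>]
      by simp
  qed (use agree \<open>i \<in> A\<close> in blast)
qed

section \<open>Beta orders and the thermomajorization curve\<close>

lemma bij_betw_lessThan_obtain_preimage:
  assumes "bij_betw \<pi> {..<d} {..<d}" and "i < d"
  obtains a where "a < d" and "\<pi> a = i"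
  using bij_betw_imp_surj_on[OF assms(1)] assms(2) by (metis imageE lessThan_iff)

lemma bij_betw_lessThan_apply: "bij_betw \<pi> {..<d} {..<d} \<Longrightarrow> a < d \<Longrightarrow> \<pi> a < d"
  by (auto dest: bij_betwE)

lemma sum_over_positions:
  assumes "bij_betw \<pi> {..<d} {..<d}"
  shows "(\<Sum>i<d. f (inv_into {..<d} \<pi> i) i) = (\<Sum>a<d. f a (\<pi> a))"
proof -
  have "(\<Sum>a<d. f a (\<pi> a)) = (\<Sum>a<d. f (inv_into {..<d} \<pi> (\<pi> a)) (\<pi> a))"
    using bij_betw_inv_into_left[OF assms] by simp
  also have "\<dots> = (\<Sum>i<d. f (inv_into {..<d} \<pi> i) i)"
    by (rule sum.reindex_bij_betw[OF assms])
  finally show ?thesis by simp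
qed

lemma beta_order_bij: "beta_order d g p \<pi> \<Longrightarrow> bij_betw \<pi> {..<d} {..<d}"
  by (simp add: beta_order_def)

lemma beta_order_exists: "\<exists>\<pi>. beta_order d g p \<pi>"
proof -
  define xs where "xs = sort_key (\<lambda>i. - (p i / g i)) [0..<d]"
  have "length xs = d" "set xs = {..<d}" "distinct xs"
    by (simp_all add: xs_def atLeast0LessThan)
  then have "bij_betw ((!) xs) {..<d} {..<d}"
    by (intro bij_betw_nth) simp_all
  moreover have "sorted (map (\<lambda>i. - (p i / g i)) xs)"
    unfolding xs_def by (rule sorted_sort_key)
  then have "p (xs ! (k + 1)) / g (xs ! (k + 1)) \<le> p (xs ! k) / g (xs ! k)" if "k + 1 < d" for k
    using sorted_nth_mono[of _ k "k + 1"] that \<open>length xs = d\<close> by fastforce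
  ultimately show ?thesis
    unfolding beta_order_def by blast
qed

lemma beta_order_antimono:
  assumes "beta_order d g p \<pi>" and "a \<le> b" and "b < d"
  shows "p (\<pi> b) / g (\<pi> b) \<le> p (\<pi> a) / g (\<pi> a)"
  using \<open>a \<le> b\<close> \<open>b < d\<close>
proof (induction b rule: dec_induct)
  case (step n)
  have "p (\<pi> (Suc n)) / g (\<pi> (Suc n)) \<le> p (\<pi> n) / g (\<pi> n)"
    using assms(1) step.prems unfolding beta_order_def by simp
  with step show ?case by simp
qed simp

definition prefix_sum :: "(nat \<Rightarrow> real) \<Rightarrow> (nat \<Rightarrow> nat) \<Rightarrow> nat \<Rightarrow> real" where
  "prefix_sum f \<pi> k = (\<Sum>c<k. f (\<pi> c))"

lemma prefix_sum_0 [simp]: "prefix_sum f \<pi> 0 = 0"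
  by (simp add: prefix_sum_def)

lemma prefix_sum_Suc [simp]: "prefix_sum f \<pi> (Suc k) = prefix_sum f \<pi> k + f (\<pi> k)"
  by (simp add: prefix_sum_def)

lemma prefix_sum_full: "bij_betw \<pi> {..<d} {..<d} \<Longrightarrow> prefix_sum f \<pi> d = (\<Sum>i<d. f i)"
  unfolding prefix_sum_def by (rule sum.reindex_bij_betw)

lemma curve_vertex_prefix_sum: "curve_vertex g p \<pi> k = (prefix_sum g \<pi> k, prefix_sum p \<pi> k)"
  by (simp add: curve_vertex_def prefix_sum_def)

lemma curve_vertex_on_curve:
  assumes "beta_order d g p \<pi>" and "0 < d" and "k \<le> d"
  shows "on_curve d g p (curve_vertex g p \<pi> k)"
proof (cases "k < d")
  case True
  then show ?thesis
    using assms(1) unfolding on_curve_def by (intro exI[of _ \<pi>] conjI bexI exI[of _ k] exI[of _ 0]) auto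
next
  case False
  then have "Suc (d - 1) = k"
    using assms(2,3) by simp
  then show ?thesis
    using assms(1,2) unfolding on_curve_def
    by (intro exI[of _ \<pi>] conjI exI[of _ "d - 1"] exI[of _ 1]) auto
qed

lemma sum_prefix_then_fraction:
  fixes f :: "nat \<Rightarrow> real"
  assumes "j < d"
  shows "(\<Sum>a<d. (if a < j then 1 else if a = j then t else 0) * f a) = (\<Sum>a<j. f a) + t * f j"
proof -
  have "(\<Sum>a<d. (if a < j then 1 else if a = j then t else 0) * f a)
      = (\<Sum>a<Suc j. (if a < j then 1 else if a = j then t else 0) * f a)"
    using assms by (intro sum.mono_neutral_right) auto
  also have "\<dots> = (\<Sum>a<j. f a) + t * f j"
    by simp
  finally show ?thesis .
qed

definition greedy_along :: "nat \<Rightarrow> (nat \<Rightarrow> nat) \<Rightarrow> (nat \<Rightarrow> real) \<Rightarrow> bool" where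
  "greedy_along d \<pi> \<sigma> \<longleftrightarrow> (\<forall>a a'. a < a' \<longrightarrow> a' < d \<longrightarrow> 0 < \<sigma> (\<pi> a') \<longrightarrow> \<sigma> (\<pi> a) = 1)"

lemma on_curve_greedy_weights:
  assumes "on_curve d g p (x, y)"
  obtains \<pi> \<sigma> where "beta_order d g p \<pi>" and "greedy_along d \<pi> \<sigma>"
    and "\<And>i. i < d \<Longrightarrow> 0 \<le> \<sigma> i \<and> \<sigma> i \<le> 1"
    and "x = (\<Sum>i<d. \<sigma> i * g i)" and "y = (\<Sum>i<d. \<sigma> i * p i)"
proof -
  obtain \<pi> j t where order: "beta_order d g p \<pi>" and "j < d" "0 \<le> t" "t \<le> 1"
    and x: "x = (1 - t) * fst (curve_vertex g p \<pi> j) + t * fst (curve_vertex g p \<pi> (Suc j))"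
    and y: "y = (1 - t) * snd (curve_vertex g p \<pi> j) + t * snd (curve_vertex g p \<pi> (Suc j))"
    using assms unfolding on_curve_def by auto
  note \<pi> = beta_order_bij[OF order]
  define w where "w a = (if a < j then 1 else if a = j then t else 0)" for a
  define \<sigma> where "\<sigma> i = w (inv_into {..<d} \<pi> i)" for i
  have \<sigma>_at: "\<sigma> (\<pi> a) = w a" if "a < d" for a
    using bij_betw_inv_into_left[OF \<pi>, of a] that by (simp add: \<sigma>_def)
  have mass: "(\<Sum>i<d. \<sigma> i * h i) = (\<Sum>a<j. h (\<pi> a)) + t * h (\<pi> j)" for h :: "nat \<Rightarrow> real"
    using sum_over_positions[OF \<pi>, of "\<lambda>a i. w a * h i"]
      sum_prefix_then_fraction[OF \<open>j < d\<close>, of t "\<lambda>a. h (\<pi> a)"]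
    by (simp add: \<sigma>_def w_def)
  show ?thesis
  proof (rule that[OF order])
    show "greedy_along d \<pi> \<sigma>"
      unfolding greedy_along_def by (auto simp: \<sigma>_at w_def split: if_splits)
    show "0 \<le> \<sigma> i \<and> \<sigma> i \<le> 1" for i
      using \<open>0 \<le> t\<close> \<open>t \<le> 1\<close> by (simp add: \<sigma>_def w_def)
    show "x = (\<Sum>i<d. \<sigma> i * g i)"
      using x mass[of g] by (simp add: curve_vertex_def algebra_simps)
    show "y = (\<Sum>i<d. \<sigma> i * p i)"
      using y mass[of p] by (simp add: curve_vertex_def algebra_simps)
  qed
qed

locale positive_weights =
  fixes d :: nat and g :: "nat \<Rightarrow> real"
  assumes weight_pos: "i < d \<Longrightarrow> 0 < g i"
begin

lemma weight_pos_at_position: "bij_betw \<pi> {..<d} {..<d} \<Longrightarrow> a < d \<Longrightarrow> 0 < g (\<pi> a)"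
  using weight_pos bij_betw_lessThan_apply by blast

lemma greedy_threshold_exists:
  assumes order: "beta_order d g p \<pi>" and greedy: "greedy_along d \<pi> \<sigma>"
    and p_nonneg: "\<And>i. i < d \<Longrightarrow> 0 \<le> p i"
  shows "\<exists>c. \<forall>i<d. (\<sigma> i < 1 \<longrightarrow> p i / g i \<le> c) \<and> (0 < \<sigma> i \<longrightarrow> c \<le> p i / g i)"
proof -
  have separated: "p i' / g i' \<le> p i / g i" if "i' < d" "\<sigma> i' < 1" "i < d" "0 < \<sigma> i" for i i'
  proof -
    obtain a' a where "a' < d" "\<pi> a' = i'" "a < d" "\<pi> a = i"
      using bij_betw_lessThan_obtain_preimage[OF beta_order_bij[OF order]] \<open>i' < d\<close> \<open>i < d\<close>
      by metis
    moreover have "\<not> a' < a"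
      using greedy that \<open>a < d\<close> \<open>\<pi> a' = i'\<close> \<open>\<pi> a = i\<close> unfolding greedy_along_def by force
    ultimately show ?thesis
      using beta_order_antimono[OF order, of a a'] by simp
  qed
  define N where "N = {i. i < d \<and> \<sigma> i < 1}"
  \<comment> \<open>\<open>0\<close> is a valid threshold when every item is taken fully, as the ratios are nonnegative.\<close>
  define c where "c = Max (insert 0 ((\<lambda>i. p i / g i) ` N))"
  have "finite N"
    by (simp add: N_def)
  have "c \<in> insert 0 ((\<lambda>i. p i / g i) ` N)"
    unfolding c_def using \<open>finite N\<close> by (intro Max_in) auto
  then have "c \<le> p i / g i" if "i < d" "0 < \<sigma> i" for i
    using separated[OF _ _ that] p_nonneg[OF that(1)] weight_pos[OF that(1)] by (auto simp: N_def)
  moreover have "p i / g i \<le> c" if "i < d" "\<sigma> i < 1" for i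
    unfolding c_def using \<open>finite N\<close> that by (intro Max_ge) (auto simp: N_def)
  ultimately show ?thesis
    by blast
qed

lemma greedy_maximizes:
  assumes "beta_order d g p \<pi>" and "greedy_along d \<pi> \<sigma>" and "\<And>i. i < d \<Longrightarrow> 0 \<le> p i"
    and "\<And>i. i < d \<Longrightarrow> 0 \<le> s i \<and> s i \<le> 1"
    and "(\<Sum>i<d. s i * g i) = (\<Sum>i<d. \<sigma> i * g i)"
  shows "(\<Sum>i<d. s i * p i) \<le> (\<Sum>i<d. \<sigma> i * p i)"
proof -
  obtain c where "\<forall>i<d. (\<sigma> i < 1 \<longrightarrow> p i / g i \<le> c) \<and> (0 < \<sigma> i \<longrightarrow> c \<le> p i / g i)"
    using greedy_threshold_exists[OF assms(1-3)] by blast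
  then show ?thesis
    using assms(4,5) weight_pos by (intro fractional_knapsack_le[where c = c]) auto
qed

lemma greedy_unique_maximizer:
  assumes "beta_order d g p \<pi>" and "greedy_along d \<pi> \<sigma>" and "\<And>i. i < d \<Longrightarrow> 0 \<le> p i"
    and "inj_on (\<lambda>i. p i / g i) {..<d}"
    and "\<And>i. i < d \<Longrightarrow> 0 \<le> s i \<and> s i \<le> 1"
    and "(\<Sum>i<d. s i * g i) = (\<Sum>i<d. \<sigma> i * g i)"
    and "(\<Sum>i<d. s i * p i) = (\<Sum>i<d. \<sigma> i * p i)"
    and "i < d"
  shows "s i = \<sigma> i"
proof -
  obtain c where "\<forall>i<d. (\<sigma> i < 1 \<longrightarrow> p i / g i \<le> c) \<and> (0 < \<sigma> i \<longrightarrow> c \<le> p i / g i)"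
    using greedy_threshold_exists[OF assms(1-3)] by blast
  then show ?thesis
    using assms(4-8) weight_pos by (intro fractional_knapsack_unique[where c = c and A = "{..<d}"]) auto
qed

lemma on_curve_maximal:
  assumes "on_curve d g p (x, y)" and p_nonneg: "\<And>i. i < d \<Longrightarrow> 0 \<le> p i"
    and s01: "\<And>i. i < d \<Longrightarrow> 0 \<le> s i \<and> s i \<le> 1" and "(\<Sum>i<d. s i * g i) = x"
  shows "(\<Sum>i<d. s i * p i) \<le> y"
proof -
  obtain \<pi> \<sigma> where "beta_order d g p \<pi>" "greedy_along d \<pi> \<sigma>"
    "\<And>i. i < d \<Longrightarrow> 0 \<le> \<sigma> i \<and> \<sigma> i \<le> 1"
    "x = (\<Sum>i<d. \<sigma> i * g i)" "y = (\<Sum>i<d. \<sigma> i * p i)"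
    using on_curve_greedy_weights[OF assms(1)] by blast
  then show ?thesis
    using greedy_maximizes[of p \<pi> \<sigma> s] p_nonneg s01 \<open>(\<Sum>i<d. s i * g i) = x\<close> by simp
qed

lemma greedy_on_curve:
  assumes "on_curve d g p (x, y)" and p_nonneg: "\<And>i. i < d \<Longrightarrow> 0 \<le> p i"
    and "beta_order d g p \<pi>" and "greedy_along d \<pi> \<sigma>"
    and \<sigma>01: "\<And>i. i < d \<Longrightarrow> 0 \<le> \<sigma> i \<and> \<sigma> i \<le> 1" and "(\<Sum>i<d. \<sigma> i * g i) = x"
  shows "(\<Sum>i<d. \<sigma> i * p i) = y"
proof -
  obtain \<pi>' \<tau> where "beta_order d g p \<pi>'" "greedy_along d \<pi>' \<tau>"
    "\<And>i. i < d \<Longrightarrow> 0 \<le> \<tau> i \<and> \<tau> i \<le> 1"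
    "x = (\<Sum>i<d. \<tau> i * g i)" "y = (\<Sum>i<d. \<tau> i * p i)"
    using on_curve_greedy_weights[OF assms(1)] by blast
  then have "y \<le> (\<Sum>i<d. \<sigma> i * p i)"
    using greedy_maximizes[OF assms(3,4) p_nonneg, of \<tau>] \<open>(\<Sum>i<d. \<sigma> i * g i) = x\<close> by simp
  moreover have "(\<Sum>i<d. \<sigma> i * p i) \<le> y"
    by (rule on_curve_maximal[OF assms(1) p_nonneg \<sigma>01 \<open>(\<Sum>i<d. \<sigma> i * g i) = x\<close>])
  ultimately show ?thesis
    by linarith
qed

lemma on_curve_unique_weights:
  assumes "on_curve d g p (x, y)" and p_nonneg: "\<And>i. i < d \<Longrightarrow> 0 \<le> p i"
    and distinct_ratios: "inj_on (\<lambda>i. p i / g i) {..<d}"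
    and s01: "\<And>i. i < d \<Longrightarrow> 0 \<le> s i \<and> s i \<le> 1"
    and "(\<Sum>i<d. s i * g i) = x" and "(\<Sum>i<d. s i * p i) = y"
    and s'01: "\<And>i. i < d \<Longrightarrow> 0 \<le> s' i \<and> s' i \<le> 1"
    and "(\<Sum>i<d. s' i * g i) = x" and "(\<Sum>i<d. s' i * p i) = y"
    and "i < d"
  shows "s i = s' i"
proof -
  obtain \<pi> \<sigma> where order: "beta_order d g p \<pi>" and greedy: "greedy_along d \<pi> \<sigma>"
    and "\<And>i. i < d \<Longrightarrow> 0 \<le> \<sigma> i \<and> \<sigma> i \<le> 1"
    and "x = (\<Sum>i<d. \<sigma> i * g i)" and "y = (\<Sum>i<d. \<sigma> i * p i)"
    using on_curve_greedy_weights[OF assms(1)] by blast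
  with assms(5,6,8,9) have "s i = \<sigma> i" and "s' i = \<sigma> i"
    using greedy_unique_maximizer[OF order greedy p_nonneg distinct_ratios] s01 s'01 \<open>i < d\<close>
    by simp_all
  then show ?thesis
    by simp
qed

lemma prefix_sum_mono:
  assumes "bij_betw \<pi> {..<d} {..<d}" and "k \<le> k'" and "k' \<le> d"
  shows "prefix_sum g \<pi> k \<le> prefix_sum g \<pi> k'"
proof -
  have "0 \<le> g (\<pi> c)" if "c < d" for c
    using weight_pos_at_position[OF assms(1) that] by simp
  then show ?thesis
    unfolding prefix_sum_def using assms(2,3) by (intro sum_mono2) auto
qed

lemma prefix_sum_nonneg:
  "bij_betw \<pi> {..<d} {..<d} \<Longrightarrow> k \<le> d \<Longrightarrow> 0 \<le> prefix_sum g \<pi> k"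
  using prefix_sum_mono[of \<pi> 0 k] by simp

end

locale positive_distribution = positive_weights +
  assumes weight_sum: "(\<Sum>i<d. g i) = 1"
begin

lemma dim_pos: "0 < d"
  using weight_sum by (cases d) auto

lemma prefix_sum_le_1:
  "bij_betw \<pi> {..<d} {..<d} \<Longrightarrow> k \<le> d \<Longrightarrow> prefix_sum g \<pi> k \<le> 1"
  using prefix_sum_mono[of \<pi> k d] prefix_sum_full[of \<pi> d g] weight_sum by simp

lemma tight_vertex_on_curve:
  assumes "tightly_thermomaj d g p r" and "beta_order d g r \<mu>"
    and "is_state d p" and "is_state d r" and "k \<le> d"
  shows "on_curve d g p (curve_vertex g r \<mu> k)"
proof -
  obtain lam where lam: "beta_order d g p lam"
    using beta_order_exists by blast
  consider "k = 0" | "k = d" | "1 \<le> k" "k < d"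
    using \<open>k \<le> d\<close> by linarith
  then show ?thesis
  proof cases
    case 1
    then have "curve_vertex g r \<mu> k = curve_vertex g p lam 0"
      by (simp add: curve_vertex_def)
    then show ?thesis
      using curve_vertex_on_curve[OF lam dim_pos] by simp
  next
    case 2
    then have "curve_vertex g r \<mu> k = curve_vertex g p lam d"
      using assms(3,4) prefix_sum_full[OF beta_order_bij[OF assms(2)]] prefix_sum_full[OF beta_order_bij[OF lam]]
      by (simp add: curve_vertex_prefix_sum is_state_def)
    then show ?thesis
      using curve_vertex_on_curve[OF lam dim_pos] by simp
  next
    case 3
    then show ?thesis
      using assms(1,2) unfolding tightly_thermomaj_def by blast
  qed
qed

end

section \<open>The overlap process\<close>

text \<open>Item \<open>\<pi> a\<close> occupies the interval from \<open>prefix_sum g \<pi> a\<close> to \<open>prefix_sum g \<pi> (Suc a)\<close>;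
  \<open>fill_weight d g \<pi> x i\<close> is the fraction of the interval of \<open>i\<close> lying in \<open>[0, x]\<close>.\<close>
definition fill_weight :: "nat \<Rightarrow> (nat \<Rightarrow> real) \<Rightarrow> (nat \<Rightarrow> nat) \<Rightarrow> real \<Rightarrow> nat \<Rightarrow> real" where
  "fill_weight d g \<pi> x i =
     (let a = inv_into {..<d} \<pi> i in overlap 0 x (prefix_sum g \<pi> a) (prefix_sum g \<pi> (Suc a)) / g i)"

lemma fill_weight_at:
  "bij_betw \<pi> {..<d} {..<d} \<Longrightarrow> a < d \<Longrightarrow>
     fill_weight d g \<pi> x (\<pi> a) = overlap 0 x (prefix_sum g \<pi> a) (prefix_sum g \<pi> (Suc a)) / g (\<pi> a)"
  by (simp add: fill_weight_def bij_betw_inv_into_left)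

lemma fill_weight_0 [simp]: "fill_weight d g \<pi> 0 i = 0"
  by (simp add: fill_weight_def overlap_def Let_def)

definition overlap_process :: "nat \<Rightarrow> (nat \<Rightarrow> real) \<Rightarrow> (nat \<Rightarrow> nat) \<Rightarrow> (nat \<Rightarrow> nat) \<Rightarrow> nat \<Rightarrow> nat \<Rightarrow> real" where
  "overlap_process d g lam \<mu> i j =
     (if i < d \<and> j < d then
        (let a = inv_into {..<d} lam j; b = inv_into {..<d} \<mu> i in
         overlap (prefix_sum g \<mu> b) (prefix_sum g \<mu> (Suc b)) (prefix_sum g lam a) (prefix_sum g lam (Suc a)) / g j)
      else 0)"

lemma overlap_process_at:
  assumes "bij_betw lam {..<d} {..<d}" and "bij_betw \<mu> {..<d} {..<d}" and "a < d" and "b < d"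
  shows "overlap_process d g lam \<mu> (\<mu> b) (lam a) =
    overlap (prefix_sum g \<mu> b) (prefix_sum g \<mu> (Suc b)) (prefix_sum g lam a) (prefix_sum g lam (Suc a)) / g (lam a)"
  using assms by (simp add: overlap_process_def bij_betw_inv_into_left bij_betw_lessThan_apply)

context positive_weights
begin

lemma fill_weight_greedy:
  assumes \<pi>: "bij_betw \<pi> {..<d} {..<d}"
  shows "greedy_along d \<pi> (fill_weight d g \<pi> x)"
  unfolding greedy_along_def
proof (intro allI impI)
  fix a a' assume "a < a'" "a' < d" and pos: "0 < fill_weight d g \<pi> x (\<pi> a')"
  let ?X = "prefix_sum g \<pi>"
  have g_pos: "0 < g (\<pi> a)" "0 < g (\<pi> a')"
    using \<open>a < a'\<close> \<open>a' < d\<close> weight_pos_at_position[OF \<pi>] by auto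
  have "0 < overlap 0 x (?X a') (?X (Suc a'))"
    using pos fill_weight_at[OF \<pi> \<open>a' < d\<close>] g_pos(2) by (simp add: zero_less_divide_iff)
  then have "?X a' < x"
    using overlap_pos_imp_intersect by blast
  moreover have "?X (Suc a) \<le> ?X a'"
    using prefix_sum_mono[OF \<pi>, of "Suc a" a'] \<open>a < a'\<close> \<open>a' < d\<close> by simp
  moreover have "0 \<le> ?X a"
    using prefix_sum_nonneg[OF \<pi>, of a] \<open>a < a'\<close> \<open>a' < d\<close> by simp
  ultimately have "overlap 0 x (?X a) (?X (Suc a)) = g (\<pi> a)"
    using overlap_subinterval[of 0 "?X a" "?X (Suc a)" x] g_pos by (simp add: overlap_commute)
  then show "fill_weight d g \<pi> x (\<pi> a) = 1"
    using fill_weight_at[OF \<pi>, of a] \<open>a < a'\<close> \<open>a' < d\<close> g_pos by simp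
qed

lemma fill_weight_bounds:
  assumes \<pi>: "bij_betw \<pi> {..<d} {..<d}" and "i < d"
  shows "0 \<le> fill_weight d g \<pi> x i \<and> fill_weight d g \<pi> x i \<le> 1"
proof -
  obtain a where "a < d" "\<pi> a = i"
    using bij_betw_lessThan_obtain_preimage[OF \<pi> \<open>i < d\<close>] .
  moreover have "overlap 0 x (prefix_sum g \<pi> a) (prefix_sum g \<pi> (Suc a)) \<le> g (\<pi> a)"
    using overlap_le_length[of "prefix_sum g \<pi> a" "prefix_sum g \<pi> (Suc a)" 0 x]
      weight_pos[OF \<open>i < d\<close>] \<open>\<pi> a = i\<close> by simp
  ultimately show ?thesis
    using fill_weight_at[OF \<pi>, of a g x] weight_pos[OF \<open>i < d\<close>] overlap_nonneg by simp
qed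

lemma overlap_process_plain:
  assumes lam: "bij_betw lam {..<d} {..<d}" and \<mu>: "bij_betw \<mu> {..<d} {..<d}"
  shows "plain_drawing d (overlap_process d g lam \<mu>) lam \<mu>"
  unfolding plain_drawing_def
proof (intro notI, elim exE conjE)
  fix a a' b b'
  assume "a < d" "a' < d" "b < d" "b' < d" "a < a'" "b' < b"
    and "0 < overlap_process d g lam \<mu> (\<mu> b) (lam a)" "0 < overlap_process d g lam \<mu> (\<mu> b') (lam a')"
  let ?X = "prefix_sum g lam" and ?Y = "prefix_sum g \<mu>"
  have "0 < overlap (?Y b) (?Y (Suc b)) (?X a) (?X (Suc a))"
    using \<open>0 < overlap_process d g lam \<mu> (\<mu> b) (lam a)\<close> overlap_process_at[OF lam \<mu> \<open>a < d\<close> \<open>b < d\<close>]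
      weight_pos_at_position[OF lam \<open>a < d\<close>] by (auto simp: zero_less_divide_iff)
  moreover have "0 < overlap (?Y b') (?Y (Suc b')) (?X a') (?X (Suc a'))"
    using \<open>0 < overlap_process d g lam \<mu> (\<mu> b') (lam a')\<close> overlap_process_at[OF lam \<mu> \<open>a' < d\<close> \<open>b' < d\<close>]
      weight_pos_at_position[OF lam \<open>a' < d\<close>] by (auto simp: zero_less_divide_iff)
  ultimately have "?Y b < ?X (Suc a)" and "?X a' < ?Y (Suc b')"
    using overlap_pos_imp_intersect by blast+
  moreover have "?X (Suc a) \<le> ?X a'" and "?Y (Suc b') \<le> ?Y b"
    using prefix_sum_mono[OF lam, of "Suc a" a'] prefix_sum_mono[OF \<mu>, of "Suc b'" b] \<open>a < a'\<close> \<open>a' < d\<close> \<open>b' < b\<close> \<open>b < d\<close>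
    by simp_all
  ultimately show False
    by linarith
qed

end

context positive_distribution
begin

lemma fill_weight_mass:
  assumes \<pi>: "bij_betw \<pi> {..<d} {..<d}" and "0 \<le> x" and "x \<le> 1"
  shows "(\<Sum>i<d. fill_weight d g \<pi> x i * g i) = x"
proof -
  have "(\<Sum>i<d. fill_weight d g \<pi> x i * g i) = (\<Sum>a<d. fill_weight d g \<pi> x (\<pi> a) * g (\<pi> a))"
    by (rule sum.reindex_bij_betw[OF \<pi>, symmetric])
  also have "\<dots> = (\<Sum>a<d. overlap 0 x (prefix_sum g \<pi> a) (prefix_sum g \<pi> (Suc a)))"
    using weight_pos_at_position[OF \<pi>] by (intro sum.cong) (simp_all add: fill_weight_at[OF \<pi>] less_imp_neq[symmetric])
  also have "\<dots> = overlap 0 x 0 1"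
    using sum_overlap_partition[of d "prefix_sum g \<pi>"] prefix_sum_mono[OF \<pi>]
      prefix_sum_full[OF \<pi>] weight_sum by simp
  also have "\<dots> = x"
    using assms(2,3) by (simp add: overlap_def)
  finally show ?thesis .
qed

lemma fill_weight_1:
  assumes \<pi>: "bij_betw \<pi> {..<d} {..<d}" and "i < d"
  shows "fill_weight d g \<pi> 1 i = 1"
proof -
  obtain a where "a < d" "\<pi> a = i"
    using bij_betw_lessThan_obtain_preimage[OF \<pi> \<open>i < d\<close>] .
  moreover have "overlap 0 1 (prefix_sum g \<pi> a) (prefix_sum g \<pi> (Suc a)) = g (\<pi> a)"
    using overlap_subinterval[of 0 "prefix_sum g \<pi> a" "prefix_sum g \<pi> (Suc a)" 1]
      prefix_sum_nonneg[OF \<pi>, of a] prefix_sum_le_1[OF \<pi>, of "Suc a"] less_imp_le[OF weight_pos[OF \<open>i < d\<close>]] \<open>a < d\<close> \<open>\<pi> a = i\<close>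
    by (simp add: overlap_commute)
  ultimately show ?thesis
    using fill_weight_at[OF \<pi>, of a g 1] weight_pos[OF \<open>i < d\<close>] by simp
qed

lemma overlap_process_eq_fill_weight_diff:
  assumes lam: "bij_betw lam {..<d} {..<d}" and \<mu>: "bij_betw \<mu> {..<d} {..<d}"
    and "b < d" and "j < d"
  shows "overlap_process d g lam \<mu> (\<mu> b) j
    = fill_weight d g lam (prefix_sum g \<mu> (Suc b)) j - fill_weight d g lam (prefix_sum g \<mu> b) j"
proof -
  let ?X = "prefix_sum g lam" and ?Y = "prefix_sum g \<mu>"
  obtain a where "a < d" "lam a = j"
    using bij_betw_lessThan_obtain_preimage[OF lam \<open>j < d\<close>] .
  have "overlap 0 (?Y (Suc b)) (?X a) (?X (Suc a))
      = overlap 0 (?Y b) (?X a) (?X (Suc a)) + overlap (?Y b) (?Y (Suc b)) (?X a) (?X (Suc a))"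
    using prefix_sum_nonneg[OF \<mu>, of b] prefix_sum_mono[OF \<mu>, of b "Suc b"] \<open>b < d\<close>
    by (intro overlap_split_left) simp_all
  then show ?thesis
    using overlap_process_at[OF lam \<mu> \<open>a < d\<close> \<open>b < d\<close>] fill_weight_at[OF lam \<open>a < d\<close>] \<open>lam a = j\<close>
    by (simp add: add_divide_distrib)
qed

lemma overlap_process_row_mass:
  assumes "bij_betw lam {..<d} {..<d}" and "bij_betw \<mu> {..<d} {..<d}" and "b < d"
  shows "(\<Sum>j<d. overlap_process d g lam \<mu> (\<mu> b) j * h j)
    = (\<Sum>j<d. fill_weight d g lam (prefix_sum g \<mu> (Suc b)) j * h j)
      - (\<Sum>j<d. fill_weight d g lam (prefix_sum g \<mu> b) j * h j)"
  using overlap_process_eq_fill_weight_diff[OF assms]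
  by (simp add: sum_subtractf left_diff_distrib)

lemma overlap_process_in_TP:
  assumes lam: "bij_betw lam {..<d} {..<d}" and \<mu>: "bij_betw \<mu> {..<d} {..<d}"
  shows "overlap_process d g lam \<mu> \<in> TP d g"
proof -
  let ?T = "overlap_process d g lam \<mu>" and ?Y = "prefix_sum g \<mu>"
  have Y_bounds: "0 \<le> ?Y k \<and> ?Y k \<le> 1" if "k \<le> d" for k
    using prefix_sum_nonneg[OF \<mu> that] prefix_sum_le_1[OF \<mu> that] by simp
  have column: "(\<Sum>i<d. ?T i j) = 1" if "j < d" for j
  proof -
    have "(\<Sum>i<d. ?T i j) = (\<Sum>b<d. ?T (\<mu> b) j)"
      by (rule sum.reindex_bij_betw[OF \<mu>, symmetric])
    also have "\<dots> = (\<Sum>b<d. fill_weight d g lam (?Y (Suc b)) j - fill_weight d g lam (?Y b) j)"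
      using overlap_process_eq_fill_weight_diff[OF lam \<mu> _ that] by simp
    also have "\<dots> = fill_weight d g lam (?Y d) j - fill_weight d g lam (?Y 0) j"
      by (rule sum_lessThan_telescope[of "\<lambda>k. fill_weight d g lam (?Y k) j"])
    also have "\<dots> = fill_weight d g lam 1 j"
      using prefix_sum_full[OF \<mu>, of g] weight_sum by simp
    also have "\<dots> = 1"
      by (rule fill_weight_1[OF lam that])
    finally show ?thesis .
  qed
  have row: "(\<Sum>j<d. ?T i j * g j) = g i" if "i < d" for i
  proof -
    obtain b where "b < d" "\<mu> b = i"
      using bij_betw_lessThan_obtain_preimage[OF \<mu> \<open>i < d\<close>] .
    then show ?thesis
      using overlap_process_row_mass[OF lam \<mu> \<open>b < d\<close>, of g]
        fill_weight_mass[OF lam] Y_bounds[of b] Y_bounds[of "Suc b"] by simp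
  qed
  have "0 \<le> ?T i j" for i j
    using weight_pos by (auto simp: overlap_process_def Let_def overlap_nonneg intro: divide_nonneg_pos)
  moreover have "?T i j = 0" if "d \<le> i \<or> d \<le> j" for i j
    using that by (auto simp: overlap_process_def)
  ultimately show ?thesis
    unfolding TP_def using column row by blast
qed

lemma overlap_process_maps_to:
  assumes tight: "tightly_thermomaj d g p r"
    and lam: "beta_order d g p lam" and \<mu>: "beta_order d g r \<mu>"
    and p: "is_state d p" and r: "is_state d r"
  shows "maps_to d (overlap_process d g lam \<mu>) p r"
  unfolding maps_to_def mat_apply_def
proof (intro allI impI)
  fix i assume "i < d"
  note lam_bij = beta_order_bij[OF lam] and \<mu>_bij = beta_order_bij[OF \<mu>]
  have vertex: "(\<Sum>j<d. fill_weight d g lam (prefix_sum g \<mu> k) j * p j) = prefix_sum r \<mu> k"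
    if "k \<le> d" for k
  proof (rule greedy_on_curve)
    show "on_curve d g p (prefix_sum g \<mu> k, prefix_sum r \<mu> k)"
      using tight_vertex_on_curve[OF tight \<mu> p r that] by (simp add: curve_vertex_prefix_sum)
    show "(\<Sum>j<d. fill_weight d g lam (prefix_sum g \<mu> k) j * g j) = prefix_sum g \<mu> k"
      using fill_weight_mass[OF lam_bij] prefix_sum_nonneg[OF \<mu>_bij that] prefix_sum_le_1[OF \<mu>_bij that]
      by simp
  qed (use p lam lam_bij fill_weight_greedy fill_weight_bounds in \<open>auto simp: is_state_def\<close>)
  obtain b where "b < d" "\<mu> b = i"
    using bij_betw_lessThan_obtain_preimage[OF \<mu>_bij \<open>i < d\<close>] .
  then show "(\<Sum>j<d. overlap_process d g lam \<mu> i j * p j) = r i"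
    using overlap_process_row_mass[OF lam_bij \<mu>_bij \<open>b < d\<close>, of p] vertex[of b] vertex[of "Suc b"]
    by simp
qed

end

section \<open>Uniqueness\<close>

lemma TP_prefix_rows:
  assumes T: "T \<in> TP d g" and "maps_to d T p r" and \<mu>: "bij_betw \<mu> {..<d} {..<d}" and "k \<le> d"
  shows "\<And>j. j < d \<Longrightarrow> 0 \<le> (\<Sum>b<k. T (\<mu> b) j) \<and> (\<Sum>b<k. T (\<mu> b) j) \<le> 1"
    and "(\<Sum>j<d. (\<Sum>b<k. T (\<mu> b) j) * g j) = prefix_sum g \<mu> k"
    and "(\<Sum>j<d. (\<Sum>b<k. T (\<mu> b) j) * p j) = prefix_sum r \<mu> k"
proof -
  have \<mu>_lt: "\<mu> b < d" if "b < k" for b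
    using bij_betw_lessThan_apply[OF \<mu>] that \<open>k \<le> d\<close> by simp
  have rows_mass: "(\<Sum>j<d. (\<Sum>b<k. T (\<mu> b) j) * h j) = (\<Sum>b<k. mat_apply d T h (\<mu> b))" for h
    by (simp add: mat_apply_def sum_distrib_right sum.swap[of _ "{..<d}"])
  show "(\<Sum>j<d. (\<Sum>b<k. T (\<mu> b) j) * g j) = prefix_sum g \<mu> k"
    using T \<mu>_lt by (simp add: rows_mass mat_apply_def TP_def prefix_sum_def)
  show "(\<Sum>j<d. (\<Sum>b<k. T (\<mu> b) j) * p j) = prefix_sum r \<mu> k"
    using \<open>maps_to d T p r\<close> \<mu>_lt by (simp add: rows_mass maps_to_def prefix_sum_def)
  fix j assume "j < d"
  have "(\<Sum>b<k. T (\<mu> b) j) \<le> (\<Sum>b<d. T (\<mu> b) j)"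
    using T \<open>j < d\<close> \<open>k \<le> d\<close> bij_betw_lessThan_apply[OF \<mu>] by (intro sum_mono2) (auto simp: TP_def)
  also have "\<dots> = (\<Sum>i<d. T i j)"
    by (rule sum.reindex_bij_betw[OF \<mu>])
  finally show "0 \<le> (\<Sum>b<k. T (\<mu> b) j) \<and> (\<Sum>b<k. T (\<mu> b) j) \<le> 1"
    using T \<open>j < d\<close> \<mu>_lt by (auto simp: TP_def intro: sum_nonneg)
qed

context positive_distribution
begin

lemma TP_maps_to_unique:
  assumes tight: "tightly_thermomaj d g p r" and p: "is_state d p" and r: "is_state d r"
    and distinct_ratios: "inj_on (\<lambda>i. p i / g i) {..<d}"
    and T: "T \<in> TP d g" "maps_to d T p r" and T': "T' \<in> TP d g" "maps_to d T' p r"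
  shows "T' = T"
proof -
  obtain \<mu> where \<mu>: "beta_order d g r \<mu>"
    using beta_order_exists by blast
  note \<mu>_bij = beta_order_bij[OF \<mu>]
  have rows: "(\<Sum>b<k. T' (\<mu> b) j) = (\<Sum>b<k. T (\<mu> b) j)" if "k \<le> d" "j < d" for k j
  proof (rule on_curve_unique_weights[where s = "\<lambda>j. \<Sum>b<k. T' (\<mu> b) j" and s' = "\<lambda>j. \<Sum>b<k. T (\<mu> b) j"])
    show "on_curve d g p (prefix_sum g \<mu> k, prefix_sum r \<mu> k)"
      using tight_vertex_on_curve[OF tight \<mu> p r \<open>k \<le> d\<close>] by (simp add: curve_vertex_prefix_sum)
  qed (use p distinct_ratios TP_prefix_rows[OF T \<mu>_bij \<open>k \<le> d\<close>] TP_prefix_rows[OF T' \<mu>_bij \<open>k \<le> d\<close>]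
         \<open>j < d\<close> in \<open>auto simp: is_state_def\<close>)
  show ?thesis
  proof (intro ext)
    fix i j
    show "T' i j = T i j"
    proof (cases "i < d \<and> j < d")
      case True
      then obtain b where "b < d" "\<mu> b = i"
        using bij_betw_lessThan_obtain_preimage[OF \<mu>_bij] by blast
      then show ?thesis
        using rows[of "Suc b" j] rows[of b j] True by simp
    next
      case False
      then show ?thesis
        using T(1) T'(1) by (auto simp: TP_def)
    qed
  qed
qed

end

section \<open>Extremality of plain processes\<close>

lemma sum_eq_0_single_support:
  fixes f :: "'a \<Rightarrow> real"
  assumes "finite A" and "x \<in> A" and "(\<Sum>y\<in>A. f y) = 0" and "\<And>y. y \<in> A - {x} \<Longrightarrow> f y = 0"
  shows "f x = 0"
  using sum.remove[OF assms(1,2), of f] assms(3,4) by (simp add: sum.neutral)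

lemma noncrossing_balanced_vanishes:
  fixes D :: "nat \<Rightarrow> nat \<Rightarrow> real"
  assumes "finite C" and "finite R"
    and "\<forall>a\<in>C. (\<Sum>b\<in>R. D a b) = 0" and "\<forall>b\<in>R. (\<Sum>a\<in>C. D a b) = 0"
    and "\<forall>a\<in>C. \<forall>a'\<in>C. \<forall>b\<in>R. \<forall>b'\<in>R. a < a' \<longrightarrow> b' < b \<longrightarrow> D a b = 0 \<or> D a' b' = 0"
  shows "\<forall>a\<in>C. \<forall>b\<in>R. D a b = 0"
  using assms
proof (induction "card C + card R" arbitrary: C R rule: less_induct)
  \<comment> \<open>Non-crossing forces the first row or the first column to vanish off the corner entry;
    balance then kills the corner, and that line is removed.\<close>
  case less
  show ?case
  proof (cases "C = {} \<or> R = {}")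
    case False
    define a0 where "a0 = Min C"
    define b0 where "b0 = Min R"
    have "a0 \<in> C" "b0 \<in> R" and a0_min: "\<And>a. a \<in> C \<Longrightarrow> a0 \<le> a" and b0_min: "\<And>b. b \<in> R \<Longrightarrow> b0 \<le> b"
      using False less.prems(1,2) by (auto simp: a0_def b0_def)
    have "(\<forall>b\<in>R - {b0}. D a0 b = 0) \<or> (\<forall>a\<in>C - {a0}. D a b0 = 0)"
    proof (rule ccontr)
      assume "\<not> ?thesis"
      then obtain a b where "a \<in> C - {a0}" "D a b0 \<noteq> 0" "b \<in> R - {b0}" "D a0 b \<noteq> 0"
        by blast
      moreover have "a0 < a" "b0 < b"
        using calculation a0_min b0_min by force+
      ultimately show False
        using less.prems(5) \<open>a0 \<in> C\<close> \<open>b0 \<in> R\<close> by blast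
    qed
    then show ?thesis
    proof
      assume row: "\<forall>b\<in>R - {b0}. D a0 b = 0"
      then have "D a0 b0 = 0"
        using sum_eq_0_single_support[OF less.prems(2) \<open>b0 \<in> R\<close>] less.prems(3) \<open>a0 \<in> C\<close> by blast
      with row have "\<forall>b\<in>R. D a0 b = 0"
        by blast
      moreover have "\<forall>a\<in>C - {a0}. \<forall>b\<in>R. D a b = 0"
      proof (rule less.hyps)
        show "card (C - {a0}) + card R < card C + card R"
          using card_Diff1_less[OF less.prems(1) \<open>a0 \<in> C\<close>] by linarith
        show "\<forall>b\<in>R. (\<Sum>a\<in>C - {a0}. D a b) = 0"
          using less.prems(1,4) \<open>a0 \<in> C\<close> \<open>\<forall>b\<in>R. D a0 b = 0\<close> by (simp add: sum_diff1)
      qed (use less.prems in auto)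
      ultimately show ?thesis
        by blast
    next
      assume column: "\<forall>a\<in>C - {a0}. D a b0 = 0"
      then have "D a0 b0 = 0"
        using sum_eq_0_single_support[OF less.prems(1) \<open>a0 \<in> C\<close>] less.prems(4) \<open>b0 \<in> R\<close> by blast
      with column have "\<forall>a\<in>C. D a b0 = 0"
        by blast
      moreover have "\<forall>a\<in>C. \<forall>b\<in>R - {b0}. D a b = 0"
      proof (rule less.hyps)
        show "card C + card (R - {b0}) < card C + card R"
          using card_Diff1_less[OF less.prems(2) \<open>b0 \<in> R\<close>] by linarith
        show "\<forall>a\<in>C. (\<Sum>b\<in>R - {b0}. D a b) = 0"
          using less.prems(2,3) \<open>b0 \<in> R\<close> \<open>\<forall>a\<in>C. D a b0 = 0\<close> by (simp add: sum_diff1)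
      qed (use less.prems in auto)
      ultimately show ?thesis
        by blast
    qed
  qed blast
qed

lemma convex_combination_pos:
  fixes x y t :: real
  assumes "0 \<le> x" and "0 \<le> y" and "0 < t" and "t < 1" and "x \<noteq> y"
  shows "0 < t * x + (1 - t) * y"
proof (cases "0 < x")
  case True
  then show ?thesis using assms by (intro add_pos_nonneg) auto
next
  case False
  then show ?thesis using assms by (intro add_nonneg_pos) auto
qed

lemma TP_difference_balanced:
  assumes A: "A \<in> TP d g" and B: "B \<in> TP d g"
    and lam: "bij_betw lam {..<d} {..<d}" and \<mu>: "bij_betw \<mu> {..<d} {..<d}"
  shows "a < d \<Longrightarrow> (\<Sum>b<d. (A (\<mu> b) (lam a) - B (\<mu> b) (lam a)) * g (lam a)) = 0"
    and "b < d \<Longrightarrow> (\<Sum>a<d. (A (\<mu> b) (lam a) - B (\<mu> b) (lam a)) * g (lam a)) = 0"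
proof -
  assume "a < d"
  have "(\<Sum>b<d. (A (\<mu> b) (lam a) - B (\<mu> b) (lam a)) * g (lam a))
      = ((\<Sum>b<d. A (\<mu> b) (lam a)) - (\<Sum>b<d. B (\<mu> b) (lam a))) * g (lam a)"
    by (simp add: sum_subtractf flip: sum_distrib_right)
  also have "\<dots> = ((\<Sum>i<d. A i (lam a)) - (\<Sum>i<d. B i (lam a))) * g (lam a)"
    using sum.reindex_bij_betw[OF \<mu>, of "\<lambda>i. A i (lam a)"] sum.reindex_bij_betw[OF \<mu>, of "\<lambda>i. B i (lam a)"]
    by simp
  finally show "(\<Sum>b<d. (A (\<mu> b) (lam a) - B (\<mu> b) (lam a)) * g (lam a)) = 0"
    using A B bij_betw_lessThan_apply[OF lam \<open>a < d\<close>] by (simp add: TP_def)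
next
  assume "b < d"
  have "(\<Sum>a<d. (A (\<mu> b) (lam a) - B (\<mu> b) (lam a)) * g (lam a))
      = (\<Sum>j<d. A (\<mu> b) j * g j) - (\<Sum>j<d. B (\<mu> b) j * g j)"
    by (simp add: left_diff_distrib sum_subtractf sum.reindex_bij_betw[OF lam, of "\<lambda>j. A (\<mu> b) j * g j"]
        sum.reindex_bij_betw[OF lam, of "\<lambda>j. B (\<mu> b) j * g j"])
  then show "(\<Sum>a<d. (A (\<mu> b) (lam a) - B (\<mu> b) (lam a)) * g (lam a)) = 0"
    using A B bij_betw_lessThan_apply[OF \<mu> \<open>b < d\<close>] by (simp add: TP_def)
qed

context positive_weights
begin

lemma plain_drawing_extremal:
  assumes T: "T \<in> TP d g" and lam: "bij_betw lam {..<d} {..<d}" and \<mu>: "bij_betw \<mu> {..<d} {..<d}"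
    and plain: "plain_drawing d T lam \<mu>"
  shows "extremal_TP d g T"
  unfolding extremal_TP_def
proof (intro conjI T notI)
  assume "\<exists>A\<in>TP d g. \<exists>B\<in>TP d g. A \<noteq> B \<and>
    (\<exists>t::real. 0 < t \<and> t < 1 \<and> T = (\<lambda>i j. t * A i j + (1 - t) * B i j))"
  then obtain A B t where A: "A \<in> TP d g" and B: "B \<in> TP d g" and "A \<noteq> B" and "0 < t" "t < 1"
    and T_eq: "T = (\<lambda>i j. t * A i j + (1 - t) * B i j)"
    by blast
  define D where "D a b = (A (\<mu> b) (lam a) - B (\<mu> b) (lam a)) * g (lam a)" for a b
  have support: "0 < T (\<mu> b) (lam a)" if "a < d" "b < d" "D a b \<noteq> 0" for a b
  proof -
    have "\<mu> b < d" "lam a < d"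
      using bij_betw_lessThan_apply lam \<mu> that by blast+
    then show ?thesis
      using A B \<open>0 < t\<close> \<open>t < 1\<close> \<open>D a b \<noteq> 0\<close> unfolding T_eq D_def TP_def
      by (auto intro!: convex_combination_pos)
  qed
  have "\<forall>a\<in>{..<d}. \<forall>b\<in>{..<d}. D a b = 0"
  proof (rule noncrossing_balanced_vanishes)
    show "\<forall>a\<in>{..<d}. (\<Sum>b\<in>{..<d}. D a b) = 0" "\<forall>b\<in>{..<d}. (\<Sum>a\<in>{..<d}. D a b) = 0"
      using TP_difference_balanced[OF A B lam \<mu>] by (simp_all add: D_def)
    show "\<forall>a\<in>{..<d}. \<forall>a'\<in>{..<d}. \<forall>b\<in>{..<d}. \<forall>b'\<in>{..<d}. a < a' \<longrightarrow> b' < b \<longrightarrow> D a b = 0 \<or> D a' b' = 0"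
      using plain support unfolding plain_drawing_def by blast
  qed simp_all
  have "A = B"
  proof (intro ext)
    fix i j
    show "A i j = B i j"
    proof (cases "i < d \<and> j < d")
      case True
      then obtain a b where "a < d" "lam a = j" "b < d" "\<mu> b = i"
        using bij_betw_lessThan_obtain_preimage lam \<mu> by metis
      then show ?thesis
        using \<open>\<forall>a\<in>{..<d}. \<forall>b\<in>{..<d}. D a b = 0\<close> weight_pos_at_position[OF lam \<open>a < d\<close>] by (auto simp: D_def)
    next
      case False
      then show ?thesis
        using A B by (auto simp: TP_def)
    qed
  qed
  with \<open>A \<noteq> B\<close> show False ..
qed

end

lemma gibbs_positive_distribution:
  assumes "0 < d"
  shows "positive_distribution d (gibbs d \<beta> E)"
proof
  have Z_pos: "0 < (\<Sum>j<d. exp (- \<beta> * E j))"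
    using assms by (intro sum_pos) auto
  then show "0 < gibbs d \<beta> E i" for i
    by (simp add: gibbs_def)
  show "(\<Sum>i<d. gibbs d \<beta> E i) = 1"
    using Z_pos by (simp add: gibbs_def flip: sum_divide_distrib)
qed

theorem mainTheorem8:
  fixes d :: nat and \<beta> :: real and E :: "nat \<Rightarrow> real" and p r :: "nat \<Rightarrow> real"
  assumes "2 \<le> d" and "0 < \<beta>" and "E 0 = 0" and "inj_on E {..<d}"
    and "is_state d p" and "is_state d r"
    and "tightly_thermomaj d (gibbs d \<beta> E) p r"
  shows "\<exists>T. extremal_TP d (gibbs d \<beta> E) T \<and> biplanar d (gibbs d \<beta> E) T \<and> maps_to d T p r \<and>
           (\<exists>lam \<mu>. beta_order d (gibbs d \<beta> E) p lam \<and> beta_order d (gibbs d \<beta> E) r \<mu> \<and>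
                  plain_drawing d T lam \<mu>) \<and>
           (inj_on (\<lambda>i. p i / gibbs d \<beta> E i) {..<d} \<longrightarrow>
              (\<forall>T'\<in>TP d (gibbs d \<beta> E). maps_to d T' p r \<longrightarrow> T' = T))"
proof -
  let ?g = "gibbs d \<beta> E"
  interpret positive_distribution d ?g
    using gibbs_positive_distribution \<open>2 \<le> d\<close> by simp
  obtain lam \<mu> where lam: "beta_order d ?g p lam" and \<mu>: "beta_order d ?g r \<mu>"
    using beta_order_exists by metis
  let ?T = "overlap_process d ?g lam \<mu>"
  have TP: "?T \<in> TP d ?g"
    by (rule overlap_process_in_TP[OF beta_order_bij[OF lam] beta_order_bij[OF \<mu>]])
  have plain: "plain_drawing d ?T lam \<mu>"
    by (rule overlap_process_plain[OF beta_order_bij[OF lam] beta_order_bij[OF \<mu>]])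
  have extremal: "extremal_TP d ?g ?T"
    by (rule plain_drawing_extremal[OF TP beta_order_bij[OF lam] beta_order_bij[OF \<mu>] plain])
  have maps: "maps_to d ?T p r"
    by (rule overlap_process_maps_to[OF assms(7) lam \<mu> assms(5,6)])
  show ?thesis
  proof (intro exI conjI impI ballI)
    show "biplanar d ?g ?T"
      unfolding biplanar_def using extremal plain beta_order_bij[OF lam] beta_order_bij[OF \<mu>] by blast
    show "T' = ?T" if "inj_on (\<lambda>i. p i / ?g i) {..<d}" "T' \<in> TP d ?g" "maps_to d T' p r" for T'
      using TP_maps_to_unique[OF assms(7,5,6) that(1) TP maps that(2,3)] .
  qed (use extremal maps lam \<mu> plain in auto)
qed

end
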